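(* Let $l$ be a prime number and let $a,b,c\in\mathbb{Z}$ satisfy $\gcd(a,b)=1$ and $$(a-b)^4+a^4+(a+b)^4=c^l,$$ equivalently $c^l=3a^4+12a^2b^2+2b^4$. Then $c$ is not divisible by $2$, $3$ or $5$; consequently $a$ is odd and $b$ is not divisible by $3$. *)

theory Defs
  imports "HOL-Computational_Algebra.Primes"
begin

end

theory Submission
  imports Defs "HOL-Number_Theory.Cong"
begin

text \<open>Since \<open>l \<ge> 2\<close>, a prime \<open>p\<close> dividing \<open>c\<close> makes \<open>p\<^sup>2\<close> divide
  \<open>3a\<^sup>4 + 12a\<^sup>2b\<^sup>2 + 2b\<^sup>4 = c\<^sup>l\<close>. For \<open>p = 2, 3, 5\<close> this forces \<open>p\<close> to divide
  both \<open>a\<close> and \<open>b\<close>: modulo 2 the form reduces to \<open>a\<^sup>4\<close>, and once \<open>a\<close> is even,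
  modulo 4 to \<open>2b\<^sup>4\<close>; modulo 3 it reduces to \<open>2b\<^sup>4\<close>, and once \<open>3 dvd b\<close>,
  modulo 9 to \<open>3a\<^sup>4\<close>; modulo 5 it has no nontrivial zero. This contradicts
  \<open>gcd a b = 1\<close>. The same reductions modulo 2 and 3 show that \<open>a\<close> even or
  \<open>3 dvd b\<close> would put 2 or 3 into \<open>c\<close>.\<close>

definition quartic_form :: "int \<Rightarrow> int \<Rightarrow> int" where
  "quartic_form a b = 3 * a ^ 4 + 12 * a ^ 2 * b ^ 2 + 2 * b ^ 4"

lemma sum_fourth_powers_eq_quartic_form:
  "(a - b) ^ 4 + a ^ 4 + (a + b) ^ 4 = quartic_form a b"
  by (simp add: quartic_form_def algebra_simps power4_eq_xxxx power2_eq_square)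

lemma quartic_form_cong_mod:
  "[quartic_form a b = quartic_form (a mod m) (b mod m)] (mod m)"
  unfolding quartic_form_def
  by (intro cong_add cong_mult cong_pow cong_refl) (simp_all add: cong_def)

lemma even_quartic_form_iff: "even (quartic_form a b) \<longleftrightarrow> even a"
  by (simp add: quartic_form_def)

lemma three_dvd_quartic_form_iff: "3 dvd quartic_form a b \<longleftrightarrow> 3 dvd b"
proof -
  have "quartic_form a b = 3 * (a ^ 4 + 4 * a ^ 2 * b ^ 2) + 2 * b ^ 4"
    by (simp add: quartic_form_def)
  then have "3 dvd quartic_form a b \<longleftrightarrow> 3 dvd 2 * b ^ 4"
    by (simp add: dvd_add_right_iff)
  also have "\<dots> \<longleftrightarrow> 3 dvd b"
    by (simp add: prime_dvd_mult_iff prime_dvd_power_iff)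
  finally show ?thesis .
qed

lemma four_dvd_quartic_formD:
  assumes "4 dvd quartic_form a b"
  shows "2 dvd a \<and> 2 dvd b"
proof -
  have "even (quartic_form a b)"
    by (rule dvd_trans[OF _ assms]) simp
  then have "even a"
    by (simp add: even_quartic_form_iff)
  then obtain k where "a = 2 * k" ..
  then have "quartic_form a b = 4 * (12 * k ^ 4 + 12 * k ^ 2 * b ^ 2) + 2 * b ^ 4"
    by (simp add: quartic_form_def power_mult_distrib)
  then have "4 dvd 2 * b ^ 4"
    using assms by (simp add: dvd_add_right_iff)
  then have "even (b ^ 4)"
    using dvd_mult_cancel_left[of 2 2 "b ^ 4"] by simp
  then show ?thesis
    using \<open>even a\<close> by simp
qed

lemma nine_dvd_quartic_formD:
  assumes "9 dvd quartic_form a b"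
  shows "3 dvd a \<and> 3 dvd b"
proof -
  have "3 dvd quartic_form a b"
    by (rule dvd_trans[OF _ assms]) simp
  then have "3 dvd b"
    by (simp add: three_dvd_quartic_form_iff)
  then obtain k where "b = 3 * k" ..
  then have "quartic_form a b = 9 * (12 * a ^ 2 * k ^ 2 + 18 * k ^ 4) + 3 * a ^ 4"
    by (simp add: quartic_form_def power_mult_distrib)
  then have "9 dvd 3 * a ^ 4"
    using assms by (simp add: dvd_add_right_iff)
  then have "3 dvd a ^ 4"
    by auto
  then show ?thesis
    using \<open>3 dvd b\<close> by (simp add: prime_dvd_power_iff)
qed

lemma five_dvd_quartic_formD:
  assumes "5 dvd quartic_form a b"
  shows "5 dvd a \<and> 5 dvd b"
proof -
  have "quartic_form (a mod 5) (b mod 5) mod 5 = 0"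
    using assms quartic_form_cong_mod[of a b 5] by (simp add: cong_def)
  moreover have "a mod 5 \<in> {0, 1, 2, 3, 4}" "b mod 5 \<in> {0, 1, 2, 3, 4}"
    by auto
  ultimately show ?thesis
    unfolding dvd_eq_mod_eq_0 by (auto simp: quartic_form_def)
qed

lemma square_dvd_quartic_formD:
  assumes "p \<in> {2, 3, 5}" and "p ^ 2 dvd quartic_form a b"
  shows "p dvd a \<and> p dvd b"
proof -
  consider "p = 2" | "p = 3" | "p = 5"
    using assms(1) by blast
  then show ?thesis
  proof cases
    case 1
    then show ?thesis
      using assms(2) four_dvd_quartic_formD by simp
  next
    case 2
    then show ?thesis
      using assms(2) nine_dvd_quartic_formD by simp
  next
    case 3
    then have "5 dvd quartic_form a b"
      using assms(2) dvd_trans[of 5 25 "quartic_form a b"] by simp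
    then have "5 dvd a \<and> 5 dvd b"
      by (rule five_dvd_quartic_formD)
    with \<open>p = 5\<close> show ?thesis
      by simp
  qed
qed

theorem proposition2p1:
  fixes l :: nat and a b c :: int
  assumes "prime l"
    and "gcd a b = 1"
    and "(a - b) ^ 4 + a ^ 4 + (a + b) ^ 4 = c ^ l"
  shows "\<not> (2 dvd c) \<and> \<not> (3 dvd c) \<and> \<not> (5 dvd c) \<and> odd a \<and> \<not> (3 dvd b)"
proof -
  have form_eq_power: "quartic_form a b = c ^ l"
    using assms(3) by (simp add: sum_fourth_powers_eq_quartic_form)
  have "l \<ge> 2"
    using assms(1) prime_ge_2_nat by blast
  have small_prime_not_dvd_c: "\<not> p dvd c" if "p \<in> {2, 3, 5}" for p
  proof
    assume "p dvd c"
    then have "p ^ 2 dvd quartic_form a b"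
      unfolding form_eq_power using \<open>l \<ge> 2\<close> by (rule dvd_power_le)
    with that have "p dvd gcd a b"
      by (simp add: square_dvd_quartic_formD)
    with that assms(2) show False
      by auto
  qed
  have prime_dvd_c: "p dvd c" if "prime p" and "p dvd quartic_form a b" for p
    using prime_dvd_power[OF that(1)] that(2) unfolding form_eq_power .
  have "\<not> 2 dvd c" "\<not> 3 dvd c" "\<not> 5 dvd c"
    using small_prime_not_dvd_c by simp_all
  moreover have "odd a"
    using \<open>\<not> 2 dvd c\<close> prime_dvd_c[of 2] by (auto simp: even_quartic_form_iff)
  moreover have "\<not> 3 dvd b"
    using \<open>\<not> 3 dvd c\<close> prime_dvd_c[of 3] by (auto simp: three_dvd_quartic_form_iff)
  ultimately show ?thesis
    by blast
qed

end
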